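(* For every integer $n\ge 5$, every $0<r<1/2$, and every convex $n$-gon $K$, we have $$\frac{\Delta(K_r)}{\Delta(K)}\ge 1-2r.$$
   Context: Let $K=A_1A_2\ldots A_n$ be a convex polygon with vertices listed counterclockwise, indices taken modulo $n$. For fixed $0<r\le 1$, let $B_k$ be the point on the edge $A_{k+1}A_{k+2}$ with $A_{k+1}B_k/A_{k+1}A_{k+2}=r$, and let $K_r$ be the $n$-gon bounded by the segments $A_kB_k$, $k=1,\ldots,n$. $\Delta(\cdot)$ denotes area. *)

theory Defs
  imports "HOL-Analysis.Analysis"
begin

text \<open>Points of the plane are pairs of reals. Polygons are given by a vertex
function on nat, read cyclically: vertex k is A (k mod n); index 0 plays the role
of the paper's index 1.\<close>

definition cross2 :: "real \<times> real \<Rightarrow> real \<times> real \<Rightarrow> real" where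
  "cross2 u v = fst u * snd v - snd u * fst v"

definition vtx :: "nat \<Rightarrow> (nat \<Rightarrow> real \<times> real) \<Rightarrow> nat \<Rightarrow> real \<times> real" where
  "vtx n A k = A (k mod n)"

definition convex_ccw_polygon :: "nat \<Rightarrow> (nat \<Rightarrow> real \<times> real) \<Rightarrow> bool" where
  "convex_ccw_polygon n A \<longleftrightarrow> n \<ge> 3 \<and>
     (\<forall>i<n. \<forall>j<n. j \<noteq> i \<and> j \<noteq> (i + 1) mod n \<longrightarrow>
        cross2 (vtx n A (i + 1) - vtx n A i) (vtx n A j - vtx n A i) > 0)"

definition polygon_area :: "nat \<Rightarrow> (nat \<Rightarrow> real \<times> real) \<Rightarrow> real" where
  "polygon_area n P = (1/2) * (\<Sum>k<n. cross2 (vtx n P k) (vtx n P (k + 1)))"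

definition Bpt :: "nat \<Rightarrow> (nat \<Rightarrow> real \<times> real) \<Rightarrow> real \<Rightarrow> nat \<Rightarrow> real \<times> real" where
  "Bpt n A r k = vtx n A (k + 1) + r *\<^sub>R (vtx n A (k + 2) - vtx n A (k + 1))"

definition Kr_vertex :: "nat \<Rightarrow> (nat \<Rightarrow> real \<times> real) \<Rightarrow> real \<Rightarrow> nat \<Rightarrow> real \<times> real" where
  "Kr_vertex n A r k = (THE p. p \<in> closed_segment (vtx n A k) (Bpt n A r k) \<and>
                               p \<in> closed_segment (vtx n A (k + 1)) (Bpt n A r (k + 1)))"

definition area_K :: "nat \<Rightarrow> (nat \<Rightarrow> real \<times> real) \<Rightarrow> real" where
  "area_K n A = polygon_area n A"

definition area_Kr :: "nat \<Rightarrow> (nat \<Rightarrow> real \<times> real) \<Rightarrow> real \<Rightarrow> real" where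
  "area_Kr n A r = polygon_area n (Kr_vertex n A r)"

end

theory Submission
  imports Defs
begin

text \<open>Let S be twice the area of K, P_k the k-th vertex of K_r (where A_k B_k meets
A_{k+1} B_{k+1}) and E_k twice the area of the ear A_k A_{k+1} A_{k+2}. As P_{k-1} and P_k both lie
on A_k B_k, the shoelace sums of K and K_r differ by the doubled areas of the triangles
A_k A_{k+1} P_k, and each of these is at most r E_k because P_k lies on A_k B_k. It remains to show
that the ears of a convex n-gon with n \<ge> 5 satisfy \<Sum> E_k \<le> 2 S. Cutting off every other ear
leaves a convex polygon, so each of the two alternating families of ears has total at most S. For
odd n the two families miss one ear; it fits into a fan triangle of the polygon left by the second
family as soon as the edges A_k A_{k+1} and A_{k+2} A_{k+3} turn by at most \<pi>, and such a k
exists because n \<ge> 5.\<close>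

definition orient :: "real \<times> real \<Rightarrow> real \<times> real \<Rightarrow> real \<times> real \<Rightarrow> real" where
  "orient a b c = cross2 (b - a) (c - a)"

lemma orient_rotate: "orient a b c = orient b c a"
  by (simp add: orient_def cross2_def algebra_simps)

lemma orient_degenerate [simp]: "orient a a c = 0" "orient a b a = 0" "orient a b b = 0"
  by (simp_all add: orient_def cross2_def)

lemma cross2_swap: "cross2 u v = - cross2 v u"
  by (simp add: cross2_def)

lemma orient_pluecker:
  "orient x a b * orient x e c + orient x b c * orient x e a = orient x a c * orient x e b"
  by (simp add: orient_def cross2_def algebra_simps)

lemma orient_pos_trans:
  assumes "0 \<le> orient x e a" "0 < orient x e b" "0 < orient x e c"
    and "0 < orient x a b" "0 < orient x b c"
  shows "0 < orient x a c"
proof -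
  have "0 < orient x a b * orient x e c + orient x b c * orient x e a"
    using assms by (simp add: add_pos_nonneg)
  then show ?thesis
    unfolding orient_pluecker using assms(2) by (simp add: zero_less_mult_iff)
qed

lemma orient_not_local_min:
  assumes "0 < orient a b q" "0 < orient a p q" "0 < orient a q s" "0 < orient p q s"
  shows "cross2 (b - a) (p - q) < 0 \<or> cross2 (b - a) (s - q) < 0"
proof (rule ccontr)
  assume "\<not> ?thesis"
  then have "0 \<le> orient a q s * cross2 (b - a) (p - q)" "0 \<le> orient a p q * cross2 (b - a) (s - q)"
    using assms(2,3) by simp_all
  moreover have "0 < orient a b q * orient p q s" using assms(1,4) by simp
  moreover have "orient a b q * orient p q s + orient a q s * cross2 (b - a) (p - q)
      + orient a p q * cross2 (b - a) (s - q) = 0"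
    by (simp add: orient_def cross2_def algebra_simps)
  ultimately show False by linarith
qed

lemma orient_closed_segment_collinear:
  assumes "x \<in> closed_segment a b" "y \<in> closed_segment a b"
  shows "orient a x y = 0"
proof -
  obtain u v where "x = (1 - u) *\<^sub>R a + u *\<^sub>R b" "y = (1 - v) *\<^sub>R a + v *\<^sub>R b"
    using assms by (auto simp: in_segment)
  then have "x - a = u *\<^sub>R (b - a)" "y - a = v *\<^sub>R (b - a)"
    by (simp_all add: algebra_simps)
  then show ?thesis
    unfolding orient_def by (simp add: cross2_def algebra_simps del: scaleR_right_diff_distrib)
qed

lemma orient_closed_segment_le:
  assumes "p \<in> closed_segment a c" "0 \<le> orient a b c"
  shows "orient a b p \<le> orient a b c"
proof -
  obtain u where u: "p = (1 - u) *\<^sub>R a + u *\<^sub>R c" "u \<le> 1"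
    using assms(1) by (auto simp: in_segment)
  then have "p - a = u *\<^sub>R (c - a)" by (simp add: algebra_simps)
  then have "orient a b p = u * orient a b c"
    unfolding orient_def by (simp add: cross2_def algebra_simps del: scaleR_right_diff_distrib)
  then show ?thesis using mult_right_mono[OF u(2) assms(2)] by simp
qed

lemma cross2_cramer:
  assumes "cross2 x y \<noteq> 0"
  shows "w = (cross2 w y / cross2 x y) *\<^sub>R x + (cross2 x w / cross2 x y) *\<^sub>R y"
proof -
  have "cross2 w y * fst x + cross2 x w * fst y = fst w * cross2 x y"
    "cross2 w y * snd x + cross2 x w * snd y = snd w * cross2 x y"
    by (simp_all add: cross2_def algebra_simps)
  then show ?thesis using assms by (simp add: prod_eq_iff divide_simps)
qed

lemma closed_segments_unique_intersection:
  assumes D: "0 < cross2 (c - a) (d - b)"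
    and "0 \<le> cross2 (b - a) (d - b)" "cross2 (b - a) (d - b) \<le> cross2 (c - a) (d - b)"
    and "0 \<le> cross2 (b - a) (c - a)" "cross2 (b - a) (c - a) \<le> cross2 (c - a) (d - b)"
  shows "\<exists>!p. p \<in> closed_segment a c \<and> p \<in> closed_segment b d"
proof -
  define u where "u = cross2 (b - a) (d - b) / cross2 (c - a) (d - b)"
  define v where "v = cross2 (b - a) (c - a) / cross2 (c - a) (d - b)"
  have uv: "0 \<le> u" "u \<le> 1" "0 \<le> v" "v \<le> 1"
    using assms by (simp_all add: u_def v_def)
  have "b - a = u *\<^sub>R (c - a) - v *\<^sub>R (d - b)"
    using cross2_cramer[of "c - a" "d - b" "b - a"] D
    by (simp add: u_def v_def cross2_swap[of "c - a" "b - a"])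
  then have meet: "(1 - u) *\<^sub>R a + u *\<^sub>R c = (1 - v) *\<^sub>R b + v *\<^sub>R d"
    by (simp add: algebra_simps)
  show ?thesis
  proof (rule ex1I)
    show "(1 - u) *\<^sub>R a + u *\<^sub>R c \<in> closed_segment a c \<and>
        (1 - u) *\<^sub>R a + u *\<^sub>R c \<in> closed_segment b d"
      using meet uv unfolding in_segment by metis
  next
    fix p assume p_on: "p \<in> closed_segment a c \<and> p \<in> closed_segment b d"
    obtain s where s: "p = (1 - s) *\<^sub>R a + s *\<^sub>R c"
      using p_on unfolding in_segment by blast
    obtain t where "p = (1 - t) *\<^sub>R b + t *\<^sub>R d"
      using p_on unfolding in_segment by blast
    with s have "b - a = s *\<^sub>R (c - a) - t *\<^sub>R (d - b)"
      by (simp add: algebra_simps)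
    then have "cross2 (b - a) (d - b) = cross2 (s *\<^sub>R (c - a) - t *\<^sub>R (d - b)) (d - b)"
      by (rule arg_cong)
    then have "cross2 (b - a) (d - b) = s * cross2 (c - a) (d - b)"
      by (simp add: cross2_def algebra_simps)
    then have "s = u" using D by (simp add: u_def)
    then show "p = (1 - u) *\<^sub>R a + u *\<^sub>R c" using s by simp
  qed
qed

lemma sum_lessThan_shift_periodic:
  fixes g :: "nat \<Rightarrow> 'a::cancel_comm_monoid_add"
  assumes "\<And>k. g (k + n) = g k"
  shows "(\<Sum>k<n. g (s + k)) = (\<Sum>k<n. g k)"
proof (induction s)
  case (Suc s)
  have "g s + (\<Sum>k<n. g (s + Suc k)) = (\<Sum>k<Suc n. g (s + k))"
    by (simp only: sum.lessThan_Suc_shift) simp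
  also have "\<dots> = g s + (\<Sum>k<n. g (s + k))"
    using assms[of s] by (simp add: add.commute add.left_commute)
  finally show ?case using Suc by simp
qed simp

lemma ex_local_min_between:
  fixes f :: "nat \<Rightarrow> 'a::linorder"
  assumes "a \<le> c" "f (Suc a) < f a" "f c < f (Suc c)"
  shows "\<exists>j. a < j \<and> j \<le> c \<and> f j \<le> f (j - 1) \<and> f j \<le> f (Suc j)"
proof -
  obtain j where j: "j \<in> {a..Suc c}" and min: "\<And>i. i \<in> {a..Suc c} \<Longrightarrow> f j \<le> f i"
    using arg_min_if_finite[of "{a..Suc c}" f] arg_min_least[of "{a..Suc c}" _ f] assms(1) by fastforce
  have "j \<noteq> a" using min[of "Suc a"] assms(1,2) by force
  moreover have "j \<noteq> Suc c" using min[of c] assms(1,3) by force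
  ultimately have "a < j" "j \<le> c" using j by auto
  moreover have "j - 1 \<in> {a..Suc c}" "Suc j \<in> {a..Suc c}"
    using \<open>a < j\<close> \<open>j \<le> c\<close> by auto
  then have "f j \<le> f (j - 1)" "f j \<le> f (Suc j)" using min by blast+
  ultimately show ?thesis by blast
qed

definition shoelace :: "nat \<Rightarrow> (nat \<Rightarrow> real \<times> real) \<Rightarrow> real" where
  "shoelace n v = (\<Sum>k<n. cross2 (v k) (v (k + 1)))"

definition ear :: "nat \<Rightarrow> (nat \<Rightarrow> real \<times> real) \<Rightarrow> nat \<Rightarrow> real" where
  "ear n A k = orient (vtx n A k) (vtx n A (k + 1)) (vtx n A (k + 2))"

lemma polygon_area_shoelace: "polygon_area n P = shoelace n (vtx n P) / 2"
  by (simp add: polygon_area_def shoelace_def)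

lemma vtx_add_period: "vtx n A (k + n + j) = vtx n A (k + j)"
  by (metis add.assoc add.commute mod_add_self2 vtx_def)

lemma vtx_add_self [simp]: "vtx n A (k + n) = vtx n A k"
  using vtx_add_period[of n A k 0] by simp

lemma vtx_mod: "vtx n A (k mod n) = vtx n A k"
  by (simp add: vtx_def)

lemma vtx_mod_add: "vtx n A (k mod n + j) = vtx n A (k + j)"
  by (simp add: vtx_def mod_add_left_eq)

lemma shoelace_rotate:
  "shoelace n (vtx n A) = (\<Sum>i<n. cross2 (vtx n A (s + i)) (vtx n A (s + i + 1)))"
proof -
  have "\<And>k. cross2 (vtx n A (k + n)) (vtx n A (k + n + 1)) = cross2 (vtx n A k) (vtx n A (k + 1))"
    by (simp only: vtx_add_period vtx_add_self)
  from sum_lessThan_shift_periodic[of "\<lambda>k. cross2 (vtx n A k) (vtx n A (k + 1))", OF this]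
  show ?thesis by (simp add: shoelace_def add.assoc)
qed

lemma ear_add_period: "ear n A (k + n) = ear n A k"
  by (simp only: ear_def vtx_add_period vtx_add_self)

lemma ear_sum_rotate: "(\<Sum>i<n. ear n A (s + i)) = (\<Sum>i<n. ear n A i)"
  by (rule sum_lessThan_shift_periodic) (rule ear_add_period)

lemma sum_cross2_chain_fan_ears:
  fixes q :: "nat \<Rightarrow> real \<times> real"
  shows "(\<Sum>i<2*m. cross2 (q i) (q (i + 1))) + cross2 (q (2*m)) (q 0) =
   (\<Sum>j<m. orient (q 0) (q (2*j)) (q (2*j + 2))) + (\<Sum>j<m. orient (q (2*j)) (q (2*j + 1)) (q (2*j + 2)))"
proof (induction m)
  case (Suc m)
  have "cross2 (q (2*m)) (q (2*m + 1)) + cross2 (q (2*m + 1)) (q (2*m + 2)) + cross2 (q (2*m + 2)) (q 0)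
      - cross2 (q (2*m)) (q 0)
      = orient (q 0) (q (2*m)) (q (2*m + 2)) + orient (q (2*m)) (q (2*m + 1)) (q (2*m + 2))"
    by (simp add: orient_def cross2_def algebra_simps)
  with Suc show ?case by (simp add: numeral_2_eq_2)
qed (simp add: cross2_def)

text \<open>The first sum is the fan triangulation from A_s of the polygon A_s, A_{s+2}, ..., which is
what remains after cutting off the ears at A_{s+2j+1}.\<close>

lemma shoelace_alternating_split:
  assumes "2*m \<le> n" "n \<le> 2*m + 1"
  shows "shoelace n (vtx n A) =
    (\<Sum>j<m. orient (vtx n A s) (vtx n A (s + 2*j)) (vtx n A (s + 2*j + 2))) + (\<Sum>j<m. ear n A (s + 2*j))"
proof -
  define q where "q i = vtx n A (s + i)" for i
  have "shoelace n (vtx n A) = (\<Sum>i<n. cross2 (q i) (q (i + 1)))"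
    by (simp add: shoelace_rotate[of n A s] q_def add.assoc)
  also have "\<dots> = (\<Sum>i<2*m. cross2 (q i) (q (i + 1))) + cross2 (q (2*m)) (q 0)"
  proof (cases "n = 2*m")
    case True
    then show ?thesis by (simp add: q_def cross2_def)
  next
    case False
    then have "n = Suc (2*m)" using assms by simp
    then show ?thesis using vtx_add_self[of n A s] by (simp add: q_def)
  qed
  also have "\<dots> = (\<Sum>j<m. orient (q 0) (q (2*j)) (q (2*j + 2))) + (\<Sum>j<m. ear n A (s + 2*j))"
    unfolding sum_cross2_chain_fan_ears by (simp add: q_def ear_def add.assoc)
  finally show ?thesis by (simp add: q_def add.assoc)
qed

lemma shoelace_diff_eq_sum_orient:
  assumes "v n = v 0" "P n = P 0" and collinear: "\<And>k. orient (v (k + 1)) (P k) (P (k + 1)) = 0"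
  shows "shoelace n v - shoelace n P = (\<Sum>k<n. orient (v k) (v (k + 1)) (P k))"
proof -
  define g where "g k = cross2 (P k) (v k)" for k
  have "cross2 (v k) (v (k + 1)) - cross2 (P k) (P (k + 1)) = orient (v k) (v (k + 1)) (P k) + (g (Suc k) - g k)"
    for k using collinear[of k] by (simp add: g_def orient_def cross2_def algebra_simps)
  then have "shoelace n v - shoelace n P = (\<Sum>k<n. orient (v k) (v (k + 1)) (P k)) + (\<Sum>k<n. g (Suc k) - g k)"
    by (simp add: shoelace_def sum_subtractf[symmetric] sum.distrib)
  also have "(\<Sum>k<n. g (Suc k) - g k) = 0"
    by (simp only: sum_lessThan_telescope) (simp add: g_def assms(1,2))
  finally show ?thesis by simp
qed

lemma convex_ccw_polygon_ge3: "convex_ccw_polygon n A \<Longrightarrow> 3 \<le> n"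
  by (simp add: convex_ccw_polygon_def)

lemma convex_ccw_polygon_edge_pos:
  assumes cv: "convex_ccw_polygon n A" and "2 \<le> d" "d < n"
  shows "0 < orient (vtx n A k) (vtx n A (k + 1)) (vtx n A (k + d))"
proof -
  have left: "0 < cross2 (vtx n A (i + 1) - vtx n A i) (vtx n A j - vtx n A i)"
    if "i < n" "j < n" "j \<noteq> i" "j \<noteq> (i + 1) mod n" for i j
    using cv that unfolding convex_ccw_polygon_def by blast
  have ne: "(k + d) mod n \<noteq> (k + x) mod n" if "x < 2" for x
  proof
    assume "(k + d) mod n = (k + x) mod n"
    then have "d mod n = x mod n" by (simp add: nat_mod_eq_iff)
    with that assms(2,3) show False by simp
  qed
  have "(k mod n + 1) mod n = (k + 1) mod n" by (rule mod_add_left_eq)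
  then have "0 < cross2 (vtx n A (k mod n + 1) - vtx n A (k mod n)) (vtx n A ((k + d) mod n) - vtx n A (k mod n))"
    using ne[of 0] ne[of 1] assms(3) by (intro left) simp_all
  then show ?thesis by (simp add: orient_def vtx_def mod_Suc_eq)
qed

lemma convex_ccw_polygon_orient_pos:
  assumes cv: "convex_ccw_polygon n A" and "0 < p" "p < q" "q < n"
  shows "0 < orient (vtx n A k) (vtx n A (k + p)) (vtx n A (k + q))"
proof -
  have behind: "0 < orient (vtx n A k) (vtx n A (k + j)) (vtx n A (k + Suc j))"
    if "0 < j" "Suc j < n" for j
  proof -
    have "0 < orient (vtx n A (k + j)) (vtx n A (k + j + 1)) (vtx n A (k + j + (n - j)))"
      by (rule convex_ccw_polygon_edge_pos[OF cv]) (use that in auto)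
    moreover have "k + j + (n - j) = k + n" using that by simp
    ultimately show ?thesis by (simp add: orient_rotate[of "vtx n A k"])
  qed
  from \<open>p < q\<close> have "Suc p \<le> q" by simp
  then show ?thesis using \<open>q < n\<close>
  proof (induction q rule: nat_induct_at_least)
    case base
    then show ?case using behind \<open>0 < p\<close> by blast
  next
    case (Suc q)
    have "0 \<le> orient (vtx n A k) (vtx n A (k + 1)) (vtx n A (k + p))"
    proof (cases "p = 1")
      case False
      then have "2 \<le> p" "p < n" using \<open>0 < p\<close> Suc by auto
      then show ?thesis using convex_ccw_polygon_edge_pos[OF cv] less_imp_le by blast
    qed simp
    moreover have "0 < orient (vtx n A k) (vtx n A (k + 1)) (vtx n A (k + q))"
      "0 < orient (vtx n A k) (vtx n A (k + 1)) (vtx n A (k + Suc q))"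
      using convex_ccw_polygon_edge_pos[OF cv, of q k] convex_ccw_polygon_edge_pos[OF cv, of "Suc q" k]
        Suc \<open>0 < p\<close> by simp_all
    moreover have "0 < orient (vtx n A k) (vtx n A (k + p)) (vtx n A (k + q))"
      using Suc by simp
    moreover have "0 < orient (vtx n A k) (vtx n A (k + q)) (vtx n A (k + Suc q))"
      using behind Suc \<open>0 < p\<close> by simp
    ultimately show ?case by (rule orient_pos_trans)
  qed
qed

lemma convex_ccw_polygon_orient_nonneg:
  assumes cv: "convex_ccw_polygon n A" and "p \<le> q" "q \<le> n"
  shows "0 \<le> orient (vtx n A k) (vtx n A (k + p)) (vtx n A (k + q))"
proof (cases "p = 0 \<or> p = q \<or> q = n")
  case True
  then show ?thesis by auto
next
  case False
  then show ?thesis using convex_ccw_polygon_orient_pos[OF cv, of p q k] assms by simp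
qed

lemma ear_pos: "convex_ccw_polygon n A \<Longrightarrow> 0 < ear n A k"
  using convex_ccw_polygon_orient_pos[of n A 1 2 k] convex_ccw_polygon_ge3[of n A]
  by (simp add: ear_def)

lemma alternating_fan_nonneg:
  assumes cv: "convex_ccw_polygon n A" and "2*m \<le> n"
  shows "0 \<le> (\<Sum>j<m. orient (vtx n A s) (vtx n A (s + 2*j)) (vtx n A (s + 2*j + 2)))"
  by (rule sum_nonneg, simp only: add.assoc, rule convex_ccw_polygon_orient_nonneg[OF cv])
    (use assms(2) in auto)

lemma shoelace_pos:
  assumes cv: "convex_ccw_polygon n A"
  shows "0 < shoelace n (vtx n A)"
proof -
  define m where "m = n div 2"
  have m: "2*m \<le> n" "n \<le> 2*m + 1" "0 < m"
    using convex_ccw_polygon_ge3[OF cv] by (auto simp: m_def)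
  have "0 < (\<Sum>j<m. ear n A (2*j))"
    using m(3) ear_pos[OF cv] by (intro sum_pos) auto
  then show ?thesis
    using shoelace_alternating_split[OF m(1,2), of A 0] alternating_fan_nonneg[OF cv m(1), of 0]
    by simp
qed

lemma convex_ccw_polygon_ex_edge_cross_nonneg:
  assumes cv: "convex_ccw_polygon n A" and "5 \<le> n"
  shows "\<exists>k. 0 \<le> cross2 (vtx n A (k + 1) - vtx n A k) (vtx n A (k + 3) - vtx n A (k + 2))"
proof (rule ccontr)
  assume "\<not> ?thesis"
  then have neg: "cross2 (vtx n A (k + 1) - vtx n A k) (vtx n A (k + 3) - vtx n A (k + 2)) < 0" for k
    by (simp add: not_le)
  txt \<open>Otherwise the height h above the line A_2 A_3 would decrease along A_4 A_5 and increase
    along A_n A_{n+1}, hence have a local minimum at a vertex between them, contradicting convexity.\<close>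
  define h where "h j = cross2 (vtx n A 3 - vtx n A 2) (vtx n A j)" for j
  have h_diff: "h i - h j = cross2 (vtx n A 3 - vtx n A 2) (vtx n A i - vtx n A j)" for i j
    by (simp add: h_def cross2_def algebra_simps)
  have "cross2 (vtx n A 1 - vtx n A 0) (vtx n A 3 - vtx n A 2) < 0"
    using neg[of 0] by (simp add: numeral_2_eq_2)
  then have "h 0 < h 1"
    using h_diff[of 1 0] cross2_swap[of "vtx n A 1 - vtx n A 0" "vtx n A 3 - vtx n A 2"] by linarith
  then have "h n < h (Suc n)"
    using vtx_add_self[of n A 0] vtx_add_self[of n A 1] by (simp add: h_def)
  moreover have "h 5 < h 4" using neg[of 2] h_diff[of 5 4] by simp
  ultimately obtain j where j: "4 < j" "j \<le> n" "h j \<le> h (j - 1)" "h j \<le> h (Suc j)"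
    using ex_local_min_between[of 4 n h] assms(2) by auto
  have idx: "2 + (j - 3) = j - 1" "2 + (j - 2) = j" "2 + (j - 1) = Suc j" "j - 1 + 1 = j" "j - 1 + 2 = Suc j"
    using j(1) by auto
  have "0 < orient (vtx n A 2) (vtx n A 3) (vtx n A j)"
    "0 < orient (vtx n A 2) (vtx n A (j - 1)) (vtx n A j)"
    "0 < orient (vtx n A 2) (vtx n A j) (vtx n A (Suc j))"
    "0 < orient (vtx n A (j - 1)) (vtx n A j) (vtx n A (Suc j))"
    using convex_ccw_polygon_orient_pos[OF cv, of 1 "j - 2" 2]
      convex_ccw_polygon_orient_pos[OF cv, of "j - 3" "j - 2" 2]
      convex_ccw_polygon_orient_pos[OF cv, of "j - 2" "j - 1" 2]
      convex_ccw_polygon_orient_pos[OF cv, of 1 2 "j - 1"] j(1,2)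
    by (simp_all only: idx) simp_all
  from orient_not_local_min[OF this] show False
    using j(3,4) h_diff[of "j - 1" j] h_diff[of "Suc j" j] by linarith
qed

lemma ear_sum_alternating_le:
  assumes cv: "convex_ccw_polygon n A"
  shows "(\<Sum>j<n div 2. ear n A (s + 2*j)) \<le> shoelace n (vtx n A)"
proof -
  have m: "2 * (n div 2) \<le> n" "n \<le> 2 * (n div 2) + 1" by auto
  show ?thesis
    using shoelace_alternating_split[OF m, of A s] alternating_fan_nonneg[OF cv m(1), of s] by simp
qed

lemma ear_sum_alternating_plus_ear_le:
  assumes cv: "convex_ccw_polygon n A" and n: "n = 2*m + 1" "2 \<le> m"
    and k: "0 \<le> cross2 (vtx n A (k + 1) - vtx n A k) (vtx n A (k + 3) - vtx n A (k + 2))"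
  shows "(\<Sum>j<m. ear n A (k + 3 + 2*j)) + ear n A (k + 1) \<le> shoelace n (vtx n A)"
proof -
  define fan where "fan j = orient (vtx n A (k + 3)) (vtx n A (k + 3 + 2*j)) (vtx n A (k + 3 + 2*j + 2))" for j
  have split: "shoelace n (vtx n A) = (\<Sum>j<m. fan j) + (\<Sum>j<m. ear n A (k + 3 + 2*j))"
    unfolding fan_def by (rule shoelace_alternating_split) (use n in auto)
  have "fan (m - 1) \<le> (\<Sum>j<m. fan j)"
  proof (rule member_le_sum)
    show "0 \<le> fan j" if "j \<in> {..<m} - {m - 1}" for j
      using convex_ccw_polygon_orient_nonneg[OF cv, of "2*j" "2*j + 2" "k + 3"] that n
      unfolding fan_def by (simp add: add.assoc)
  qed (use n in auto)
  moreover have "k + 3 + 2*(m - 1) = k + n" "k + 3 + 2*(m - 1) + 2 = k + n + 2" using n by auto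
  then have "fan (m - 1) = orient (vtx n A (k + 3)) (vtx n A k) (vtx n A (k + 2))"
    by (simp only: fan_def vtx_add_period vtx_add_self)
  moreover have "orient (vtx n A (k + 3)) (vtx n A k) (vtx n A (k + 2)) - ear n A (k + 1) =
      cross2 (vtx n A (k + 1) - vtx n A k) (vtx n A (k + 3) - vtx n A (k + 2))"
    by (simp add: ear_def orient_def cross2_def algebra_simps numeral_3_eq_3 numeral_2_eq_2)
  ultimately show ?thesis using split k by linarith
qed

lemma ear_sum_le:
  assumes cv: "convex_ccw_polygon n A" and "5 \<le> n"
  shows "(\<Sum>i<n. ear n A i) \<le> 2 * shoelace n (vtx n A)"
proof -
  define m where "m = n div 2"
  have split: "(\<Sum>i<2*m. ear n A (s + i)) = (\<Sum>j<m. ear n A (s + 2*j)) + (\<Sum>j<m. ear n A (s + 1 + 2*j))"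
    for s
    using sum_split_even_odd[of "\<lambda>i. ear n A (s + i)" "\<lambda>i. ear n A (s + i)" m]
    by (simp add: add.assoc add.left_commute)
  show ?thesis
  proof (cases "even n")
    case True
    then have "(\<Sum>i<n. ear n A i) = (\<Sum>j<m. ear n A (0 + 2*j)) + (\<Sum>j<m. ear n A (1 + 2*j))"
      using split[of 0] by (simp add: m_def)
    then show ?thesis
      using ear_sum_alternating_le[OF cv, of 0] ear_sum_alternating_le[OF cv, of 1] by (simp add: m_def)
  next
    case False
    then have n: "n = 2*m + 1" "2 \<le> m" using assms(2) by (auto simp: m_def)
    obtain k where k: "0 \<le> cross2 (vtx n A (k + 1) - vtx n A k) (vtx n A (k + 3) - vtx n A (k + 2))"
      using convex_ccw_polygon_ex_edge_cross_nonneg[OF assms] by blast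
    have idx: "k + 2 + 1 = k + 3" "k + 2 + 2*m = k + 1 + n" using n(1) by auto
    have lt: "{..<n} = {..<Suc (2*m)}" using n(1) by simp
    have "(\<Sum>i<n. ear n A i) = (\<Sum>i<n. ear n A (k + 2 + i))"
      by (rule ear_sum_rotate[symmetric])
    also have "\<dots> = (\<Sum>i<Suc (2*m). ear n A (k + 2 + i))"
      by (simp only: lt)
    also have "\<dots> = (\<Sum>j<m. ear n A (k + 2 + 2*j)) + ((\<Sum>j<m. ear n A (k + 3 + 2*j)) + ear n A (k + 1))"
      unfolding sum.lessThan_Suc split idx ear_add_period by (simp only: add.assoc)
    finally show ?thesis
      using ear_sum_alternating_le[OF cv, of "k + 2"] ear_sum_alternating_plus_ear_le[OF cv n k]
      by (simp add: m_def)
  qed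
qed

lemma Kr_vertex_on_segments:
  assumes cv: "convex_ccw_polygon n A" and "4 \<le> n" "0 \<le> r" "r \<le> 1/2"
  shows "Kr_vertex n A r k \<in> closed_segment (vtx n A k) (Bpt n A r k) \<and>
    Kr_vertex n A r k \<in> closed_segment (vtx n A (k + 1)) (Bpt n A r (k + 1))"
proof -
  define a b c d where "a = vtx n A k" "b = vtx n A (k + 1)" "c = vtx n A (k + 2)" "d = vtx n A (k + 3)"
  define B B' where "B = Bpt n A r k" "B' = Bpt n A r (k + 1)"
  have B: "B = b + r *\<^sub>R (c - b)" "B' = c + r *\<^sub>R (d - c)"
    by (simp_all add: B_B'_def Bpt_def a_b_c_d_def numeral_3_eq_3 numeral_2_eq_2)
  have abc: "0 < orient a b c" and abd: "0 < orient a b d" and bcd: "0 < orient b c d"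
    using convex_ccw_polygon_orient_pos[OF cv, of 1 2 k] convex_ccw_polygon_orient_pos[OF cv, of 1 3 k]
      convex_ccw_polygon_orient_pos[OF cv, of 1 2 "k + 1"] assms(2)
    by (simp_all add: a_b_c_d_def add.assoc numeral_3_eq_3 numeral_2_eq_2)
  define X where "X = cross2 (b - a) (B' - b)"
  have X: "X = (1 - r) * orient a b c + r * orient a b d"
    by (simp add: X_def B orient_def cross2_def algebra_simps)
  have D: "cross2 (B - a) (B' - b) = X + r\<^sup>2 * orient b c d"
    by (simp add: X_def B orient_def cross2_def algebra_simps power2_eq_square)
  have Y: "cross2 (b - a) (B - a) = r * orient a b c"
    by (simp add: B orient_def cross2_def algebra_simps)
  have "0 < X" unfolding X using abc abd assms(3,4) by (simp add: add_pos_nonneg)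
  have "r * orient a b c \<le> X"
    unfolding X using abc abd assms(3,4) by (simp add: add_increasing2 mult_right_mono)
  have "0 \<le> r\<^sup>2 * orient b c d" "0 \<le> r * orient a b c" using abc bcd assms(3) by simp_all
  then have "\<exists>!p. p \<in> closed_segment a B \<and> p \<in> closed_segment b B'"
    using \<open>0 < X\<close> \<open>r * orient a b c \<le> X\<close>
    by (intro closed_segments_unique_intersection) (simp_all only: D Y X_def[symmetric]; linarith)+
  then show ?thesis unfolding Kr_vertex_def a_b_c_d_def B_B'_def by (rule theI')
qed

lemma vtx_Kr_vertex: "vtx n (Kr_vertex n A r) = Kr_vertex n A r"
proof
  fix k
  have "Kr_vertex n A r (k mod n) = Kr_vertex n A r k"
    by (simp only: Kr_vertex_def Bpt_def add.assoc vtx_mod_add vtx_mod)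
  then show "vtx n (Kr_vertex n A r) k = Kr_vertex n A r k" by (simp add: vtx_def)
qed

lemma orient_Bpt: "orient (vtx n A k) (vtx n A (k + 1)) (Bpt n A r k) = r * ear n A k"
  by (simp add: Bpt_def ear_def orient_def cross2_def algebra_simps)

lemma shoelace_Kr_loss_le:
  assumes cv: "convex_ccw_polygon n A" and "4 \<le> n" "0 \<le> r" "r \<le> 1/2"
  shows "shoelace n (vtx n A) - shoelace n (Kr_vertex n A r) \<le> r * (\<Sum>k<n. ear n A k)"
proof -
  note on_segments = Kr_vertex_on_segments[OF assms]
  have "Kr_vertex n A r n = Kr_vertex n A r 0"
    by (metis vtx_Kr_vertex vtx_mod mod_self mod_0)
  moreover have "orient (vtx n A (k + 1)) (Kr_vertex n A r k) (Kr_vertex n A r (k + 1)) = 0" for k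
    using on_segments[of k] on_segments[of "k + 1"] by (blast intro: orient_closed_segment_collinear)
  ultimately have "shoelace n (vtx n A) - shoelace n (Kr_vertex n A r) =
      (\<Sum>k<n. orient (vtx n A k) (vtx n A (k + 1)) (Kr_vertex n A r k))"
    by (intro shoelace_diff_eq_sum_orient) (simp_all add: vtx_def)
  also have "\<dots> \<le> (\<Sum>k<n. r * ear n A k)"
  proof (rule sum_mono)
    fix k
    have "0 \<le> orient (vtx n A k) (vtx n A (k + 1)) (Bpt n A r k)"
      unfolding orient_Bpt using ear_pos[OF cv, of k] assms(3) by simp
    with conjunct1[OF on_segments[of k]]
    have "orient (vtx n A k) (vtx n A (k + 1)) (Kr_vertex n A r k)
        \<le> orient (vtx n A k) (vtx n A (k + 1)) (Bpt n A r k)"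
      by (rule orient_closed_segment_le)
    then show "orient (vtx n A k) (vtx n A (k + 1)) (Kr_vertex n A r k) \<le> r * ear n A k"
      unfolding orient_Bpt .
  qed
  finally show ?thesis by (simp add: sum_distrib_left)
qed

theorem theorem5p1:
  fixes n :: nat and A :: "nat \<Rightarrow> real \<times> real" and r :: real
  assumes "n \<ge> 5" and "0 < r" and "r < 1/2"
    and "convex_ccw_polygon n A"
  shows "area_Kr n A r / area_K n A \<ge> 1 - 2 * r"
proof -
  let ?S = "shoelace n (vtx n A)"
  have "?S - shoelace n (Kr_vertex n A r) \<le> r * (\<Sum>k<n. ear n A k)"
    using shoelace_Kr_loss_le[OF assms(4)] assms(1-3) by simp
  also have "\<dots> \<le> r * (2 * ?S)"
    using ear_sum_le[OF assms(4,1)] assms(2) by simp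
  finally have "(1 - 2 * r) * ?S \<le> shoelace n (Kr_vertex n A r)"
    by (simp add: algebra_simps)
  moreover have "0 < ?S" by (rule shoelace_pos[OF assms(4)])
  ultimately show ?thesis
    by (simp add: area_K_def area_Kr_def polygon_area_shoelace vtx_Kr_vertex pos_le_divide_eq)
qed

end
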